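(* Let $\mathcal A$ be an abelian category and let $0\to F\to M\to C\to 0$ be a fully invariant short exact sequence in $\mathcal A$. (1) $M$ is strongly self-$F$-split if and only if $M$ is self-$F$-split and the ring $\mathrm{End}_{\mathcal A}(C)$ is abelian. (2) $M$ is dual strongly self-$F$-split if and only if $M$ is dual self-$F$-split and the ring $\mathrm{End}_{\mathcal A}(F)$ is abelian.
   Context: A ring is abelian if each of its idempotents is central. Let $\mathcal A$ be an abelian category. A morphism $s:X\to Y$ is a section if $ts=1_X$ for some $t$, and a retraction if $st=1_Y$ for some $t$. A monomorphism $i:K\to M$ is fully invariant if for every morphism $h:M\to M$ there is $\alpha:K\to K$ with $hi=i\alpha$; an epimorphism $d:M\to C$ is fully coinvariant if for every $h:M\to M$ there is $\beta:C\to C$ with $dh=\beta d$. A short exact sequence $0\to F\xrightarrow{i}M\xrightarrow{d}C\to 0$ is fully invariant if $i$ is fully invariant. $M$ is self-$F$-split (resp. strongly self-$F$-split) if for every morphism $g:M\to M$, $\ker(dg)$ is a section (resp. a fully invariant section); $M$ is dual self-$F$-split (resp. dual strongly self-$F$-split) if for every morphism $g:M\to M$, $\mathrm{coker}(gi)$ is a retraction (resp. a fully coinvariant retraction). *)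

theory Defs
  imports Main
begin

text \<open>A (locally small, set-based) category presented by its objects, arrows,
  domain/codomain, composition (cmp g f = g after f) and identities, together with
  a preadditive structure (addition and zero on each hom-set).\<close>

record ('o, 'm) precat =
  Ob   :: "'o set"
  Ar   :: "'m set"
  Dm   :: "'m \<Rightarrow> 'o"
  Cd   :: "'m \<Rightarrow> 'o"
  cmp  :: "'m \<Rightarrow> 'm \<Rightarrow> 'm"
  idm  :: "'o \<Rightarrow> 'm"
  addm :: "'m \<Rightarrow> 'm \<Rightarrow> 'm"
  zerom :: "'o \<Rightarrow> 'o \<Rightarrow> 'm"

definition hom :: "('o, 'm) precat \<Rightarrow> 'o \<Rightarrow> 'o \<Rightarrow> 'm set" where
  "hom A X Y = {f \<in> Ar A. Dm A f = X \<and> Cd A f = Y}"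

definition is_category :: "('o, 'm) precat \<Rightarrow> bool" where
  "is_category A \<longleftrightarrow>
     (\<forall>f\<in>Ar A. Dm A f \<in> Ob A \<and> Cd A f \<in> Ob A) \<and>
     (\<forall>X\<in>Ob A. idm A X \<in> hom A X X) \<and>
     (\<forall>f\<in>Ar A. \<forall>g\<in>Ar A. Cd A f = Dm A g \<longrightarrow> cmp A g f \<in> hom A (Dm A f) (Cd A g)) \<and>
     (\<forall>f\<in>Ar A. cmp A f (idm A (Dm A f)) = f \<and> cmp A (idm A (Cd A f)) f = f) \<and>
     (\<forall>f\<in>Ar A. \<forall>g\<in>Ar A. \<forall>h\<in>Ar A. Cd A f = Dm A g \<and> Cd A g = Dm A h \<longrightarrow>
        cmp A h (cmp A g f) = cmp A (cmp A h g) f)"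

definition is_preadditive :: "('o, 'm) precat \<Rightarrow> bool" where
  "is_preadditive A \<longleftrightarrow>
     (\<forall>X\<in>Ob A. \<forall>Y\<in>Ob A.
        zerom A X Y \<in> hom A X Y \<and>
        (\<forall>f\<in>hom A X Y. \<forall>g\<in>hom A X Y. addm A f g \<in> hom A X Y) \<and>
        (\<forall>f\<in>hom A X Y. \<forall>g\<in>hom A X Y. \<forall>h\<in>hom A X Y.
            addm A (addm A f g) h = addm A f (addm A g h)) \<and>
        (\<forall>f\<in>hom A X Y. \<forall>g\<in>hom A X Y. addm A f g = addm A g f) \<and>
        (\<forall>f\<in>hom A X Y. addm A f (zerom A X Y) = f) \<and>
        (\<forall>f\<in>hom A X Y. \<exists>g\<in>hom A X Y. addm A f g = zerom A X Y)) \<and>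
     (\<forall>X\<in>Ob A. \<forall>Y\<in>Ob A. \<forall>Z\<in>Ob A.
        \<forall>f\<in>hom A X Y. \<forall>g\<in>hom A X Y. \<forall>h\<in>hom A Y Z.
          cmp A h (addm A f g) = addm A (cmp A h f) (cmp A h g)) \<and>
     (\<forall>X\<in>Ob A. \<forall>Y\<in>Ob A. \<forall>Z\<in>Ob A.
        \<forall>f\<in>hom A Y Z. \<forall>g\<in>hom A Y Z. \<forall>h\<in>hom A X Y.
          cmp A (addm A f g) h = addm A (cmp A f h) (cmp A g h))"

definition has_zero_object :: "('o, 'm) precat \<Rightarrow> bool" where
  "has_zero_object A \<longleftrightarrow>
     (\<exists>Z\<in>Ob A. \<forall>X\<in>Ob A. (\<exists>!f. f \<in> hom A Z X) \<and> (\<exists>!f. f \<in> hom A X Z))"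

definition has_biproducts :: "('o, 'm) precat \<Rightarrow> bool" where
  "has_biproducts A \<longleftrightarrow>
     (\<forall>X\<in>Ob A. \<forall>Y\<in>Ob A. \<exists>P\<in>Ob A. \<exists>p1\<in>hom A P X. \<exists>p2\<in>hom A P Y.
        \<exists>i1\<in>hom A X P. \<exists>i2\<in>hom A Y P.
          cmp A p1 i1 = idm A X \<and> cmp A p2 i2 = idm A Y \<and>
          cmp A p1 i2 = zerom A Y X \<and> cmp A p2 i1 = zerom A X Y \<and>
          addm A (cmp A i1 p1) (cmp A i2 p2) = idm A P)"

definition mono :: "('o, 'm) precat \<Rightarrow> 'm \<Rightarrow> bool" where
  "mono A f \<longleftrightarrow> f \<in> Ar A \<and>
     (\<forall>g\<in>Ar A. \<forall>h\<in>Ar A. Cd A g = Dm A f \<and> Cd A h = Dm A f \<and> Dm A g = Dm A h \<and>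
        cmp A f g = cmp A f h \<longrightarrow> g = h)"

definition epi :: "('o, 'm) precat \<Rightarrow> 'm \<Rightarrow> bool" where
  "epi A f \<longleftrightarrow> f \<in> Ar A \<and>
     (\<forall>g\<in>Ar A. \<forall>h\<in>Ar A. Dm A g = Cd A f \<and> Dm A h = Cd A f \<and> Cd A g = Cd A h \<and>
        cmp A g f = cmp A h f \<longrightarrow> g = h)"

definition is_kernel :: "('o, 'm) precat \<Rightarrow> 'm \<Rightarrow> 'm \<Rightarrow> bool" where
  "is_kernel A f k \<longleftrightarrow> f \<in> Ar A \<and> k \<in> Ar A \<and> Cd A k = Dm A f \<and>
     cmp A f k = zerom A (Dm A k) (Cd A f) \<and>
     (\<forall>x\<in>Ar A. Cd A x = Dm A f \<and> cmp A f x = zerom A (Dm A x) (Cd A f) \<longrightarrow>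
        (\<exists>!u. u \<in> hom A (Dm A x) (Dm A k) \<and> cmp A k u = x))"

definition is_cokernel :: "('o, 'm) precat \<Rightarrow> 'm \<Rightarrow> 'm \<Rightarrow> bool" where
  "is_cokernel A f c \<longleftrightarrow> f \<in> Ar A \<and> c \<in> Ar A \<and> Dm A c = Cd A f \<and>
     cmp A c f = zerom A (Dm A f) (Cd A c) \<and>
     (\<forall>x\<in>Ar A. Dm A x = Cd A f \<and> cmp A x f = zerom A (Dm A f) (Cd A x) \<longrightarrow>
        (\<exists>!u. u \<in> hom A (Cd A c) (Cd A x) \<and> cmp A u c = x))"

definition abelian_category :: "('o, 'm) precat \<Rightarrow> bool" where
  "abelian_category A \<longleftrightarrow> is_category A \<and> is_preadditive A \<and>
     has_zero_object A \<and> has_biproducts A \<and>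
     (\<forall>f\<in>Ar A. (\<exists>k. is_kernel A f k) \<and> (\<exists>c. is_cokernel A f c)) \<and>
     (\<forall>m. mono A m \<longrightarrow> (\<exists>g. is_kernel A g m)) \<and>
     (\<forall>e. epi A e \<longrightarrow> (\<exists>g. is_cokernel A g e))"

definition is_section :: "('o, 'm) precat \<Rightarrow> 'm \<Rightarrow> bool" where
  "is_section A s \<longleftrightarrow> s \<in> Ar A \<and>
     (\<exists>t\<in>hom A (Cd A s) (Dm A s). cmp A t s = idm A (Dm A s))"

definition is_retraction :: "('o, 'm) precat \<Rightarrow> 'm \<Rightarrow> bool" where
  "is_retraction A s \<longleftrightarrow> s \<in> Ar A \<and>
     (\<exists>t\<in>hom A (Cd A s) (Dm A s). cmp A s t = idm A (Cd A s))"

definition fully_invariant :: "('o, 'm) precat \<Rightarrow> 'm \<Rightarrow> bool" where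
  "fully_invariant A i \<longleftrightarrow> mono A i \<and>
     (\<forall>h\<in>hom A (Cd A i) (Cd A i). \<exists>\<alpha>\<in>hom A (Dm A i) (Dm A i). cmp A h i = cmp A i \<alpha>)"

definition fully_coinvariant :: "('o, 'm) precat \<Rightarrow> 'm \<Rightarrow> bool" where
  "fully_coinvariant A d \<longleftrightarrow> epi A d \<and>
     (\<forall>h\<in>hom A (Dm A d) (Dm A d). \<exists>\<beta>\<in>hom A (Cd A d) (Cd A d). cmp A d h = cmp A \<beta> d)"

text \<open>0 \<rightarrow> F --i--> M --d--> C \<rightarrow> 0 is short exact\<close>
definition short_exact :: "('o, 'm) precat \<Rightarrow> 'm \<Rightarrow> 'm \<Rightarrow> bool" where
  "short_exact A i d \<longleftrightarrow> mono A i \<and> epi A d \<and> Cd A i = Dm A d \<and>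
     is_kernel A d i \<and> is_cokernel A i d"

definition fully_invariant_ses :: "('o, 'm) precat \<Rightarrow> 'm \<Rightarrow> 'm \<Rightarrow> bool" where
  "fully_invariant_ses A i d \<longleftrightarrow> short_exact A i d \<and> fully_invariant A i"

definition abelian_End :: "('o, 'm) precat \<Rightarrow> 'o \<Rightarrow> bool" where
  "abelian_End A X \<longleftrightarrow>
     (\<forall>e\<in>hom A X X. cmp A e e = e \<longrightarrow> (\<forall>f\<in>hom A X X. cmp A e f = cmp A f e))"

definition self_F_split :: "('o, 'm) precat \<Rightarrow> 'm \<Rightarrow> 'm \<Rightarrow> bool" where
  "self_F_split A i d \<longleftrightarrow>
     (\<forall>g\<in>hom A (Cd A i) (Cd A i). \<forall>k. is_kernel A (cmp A d g) k \<longrightarrow> is_section A k)"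

definition strongly_self_F_split :: "('o, 'm) precat \<Rightarrow> 'm \<Rightarrow> 'm \<Rightarrow> bool" where
  "strongly_self_F_split A i d \<longleftrightarrow>
     (\<forall>g\<in>hom A (Cd A i) (Cd A i). \<forall>k. is_kernel A (cmp A d g) k \<longrightarrow>
        is_section A k \<and> fully_invariant A k)"

definition dual_self_F_split :: "('o, 'm) precat \<Rightarrow> 'm \<Rightarrow> 'm \<Rightarrow> bool" where
  "dual_self_F_split A i d \<longleftrightarrow>
     (\<forall>g\<in>hom A (Cd A i) (Cd A i). \<forall>c. is_cokernel A (cmp A g i) c \<longrightarrow> is_retraction A c)"

definition dual_strongly_self_F_split :: "('o, 'm) precat \<Rightarrow> 'm \<Rightarrow> 'm \<Rightarrow> bool" where
  "dual_strongly_self_F_split A i d \<longleftrightarrow>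
     (\<forall>g\<in>hom A (Cd A i) (Cd A i). \<forall>c. is_cokernel A (cmp A g i) c \<longrightarrow>
        is_retraction A c \<and> fully_coinvariant A c)"

end

theory Submission
  imports Defs
begin

text \<open>If M is strongly self-F-split, taking g = 1 shows that i splits, so d has a section s.
  For a b = 0 in End(C) the kernel k of a d = d (s a d) is then fully invariant and s b factors
  through k; invariance of k under s f d forces a f b = 0. Thus End(C) is semicommutative, hence
  abelian. Conversely, a splitting of ker(dg) yields an idempotent of End(C), central by
  hypothesis, which makes ker(dg) fully invariant. Part (2) is part (1) read in the opposite
  category, where kernels and cokernels, sections and retractions, and full invariance and
  full coinvariance trade places.\<close>

definition opposite :: "('o, 'm) precat \<Rightarrow> ('o, 'm) precat" where
  "opposite A = A\<lparr>Dm := Cd A, Cd := Dm A, cmp := \<lambda>g f. cmp A f g, zerom := \<lambda>X Y. zerom A Y X\<rparr>"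

lemma opposite_simps [simp]:
  "Ob (opposite A) = Ob A" "Ar (opposite A) = Ar A" "Dm (opposite A) = Cd A" "Cd (opposite A) = Dm A"
  "cmp (opposite A) g f = cmp A f g" "idm (opposite A) = idm A" "addm (opposite A) = addm A"
  "zerom (opposite A) X Y = zerom A Y X"
  by (simp_all add: opposite_def)

lemma hom_opposite [simp]: "hom (opposite A) X Y = hom A Y X"
  by (auto simp: hom_def)

lemma is_category_opposite: "is_category A \<Longrightarrow> is_category (opposite A)"
  unfolding is_category_def by (simp add: hom_def)

lemma mono_opposite [simp]: "mono (opposite A) f \<longleftrightarrow> epi A f"
  unfolding mono_def epi_def by auto

lemma epi_opposite [simp]: "epi (opposite A) f \<longleftrightarrow> mono A f"
  unfolding mono_def epi_def by auto

lemma is_kernel_opposite [simp]: "is_kernel (opposite A) f k \<longleftrightarrow> is_cokernel A f k"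
  unfolding is_kernel_def is_cokernel_def by auto

lemma is_cokernel_opposite [simp]: "is_cokernel (opposite A) f c \<longleftrightarrow> is_kernel A f c"
  unfolding is_kernel_def is_cokernel_def by auto

lemma is_section_opposite [simp]: "is_section (opposite A) s \<longleftrightarrow> is_retraction A s"
  unfolding is_section_def is_retraction_def by auto

lemma fully_invariant_opposite [simp]: "fully_invariant (opposite A) i \<longleftrightarrow> fully_coinvariant A i"
  unfolding fully_invariant_def fully_coinvariant_def by auto

lemma fully_coinvariant_opposite [simp]: "fully_coinvariant (opposite A) d \<longleftrightarrow> fully_invariant A d"
  unfolding fully_invariant_def fully_coinvariant_def by auto

lemma short_exact_opposite [simp]: "short_exact (opposite A) d i \<longleftrightarrow> short_exact A i d"
  unfolding short_exact_def by auto

lemma abelian_End_opposite [simp]: "abelian_End (opposite A) X \<longleftrightarrow> abelian_End A X"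
  unfolding abelian_End_def by (simp only: opposite_simps hom_opposite) metis

lemma self_F_split_opposite:
  "Cd A i = Dm A d \<Longrightarrow> self_F_split (opposite A) d i \<longleftrightarrow> dual_self_F_split A i d"
  unfolding self_F_split_def dual_self_F_split_def by simp

lemma strongly_self_F_split_opposite:
  "Cd A i = Dm A d \<Longrightarrow>
     strongly_self_F_split (opposite A) d i \<longleftrightarrow> dual_strongly_self_F_split A i d"
  unfolding strongly_self_F_split_def dual_strongly_self_F_split_def by simp

definition semicommutative_End :: "('o, 'm) precat \<Rightarrow> 'o \<Rightarrow> bool" where
  "semicommutative_End A X \<longleftrightarrow>
     (\<forall>a\<in>hom A X X. \<forall>b\<in>hom A X X. cmp A a b = zerom A X X \<longrightarrow>
        (\<forall>f\<in>hom A X X. cmp A a (cmp A f b) = zerom A X X))"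

locale preadditive_category =
  fixes A :: "('o, 'm) precat"
  assumes is_category: "is_category A" and is_preadditive: "is_preadditive A"
begin

abbreviation compose :: "'m \<Rightarrow> 'm \<Rightarrow> 'm" (infixr "\<cdot>" 55) where
  "g \<cdot> f \<equiv> cmp A g f"

lemma hom_ObD: "f \<in> hom A X Y \<Longrightarrow> X \<in> Ob A \<and> Y \<in> Ob A"
  using is_category by (auto simp: is_category_def hom_def)

lemma id_in_hom: "X \<in> Ob A \<Longrightarrow> idm A X \<in> hom A X X"
  using is_category by (simp add: is_category_def)

lemma comp_in_hom: "f \<in> hom A X Y \<Longrightarrow> g \<in> hom A Y Z \<Longrightarrow> g \<cdot> f \<in> hom A X Z"
  using is_category unfolding is_category_def hom_def by auto

lemma comp_Ar: "f \<in> Ar A \<Longrightarrow> g \<in> Ar A \<Longrightarrow> Cd A f = Dm A g \<Longrightarrow> g \<cdot> f \<in> Ar A"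
  and Dm_comp: "f \<in> Ar A \<Longrightarrow> g \<in> Ar A \<Longrightarrow> Cd A f = Dm A g \<Longrightarrow> Dm A (g \<cdot> f) = Dm A f"
  and Cd_comp: "f \<in> Ar A \<Longrightarrow> g \<in> Ar A \<Longrightarrow> Cd A f = Dm A g \<Longrightarrow> Cd A (g \<cdot> f) = Cd A g"
  using comp_in_hom[of f "Dm A f" "Cd A f" g "Cd A g"] by (simp_all add: hom_def)

lemma comp_assoc_Ar:
  "f \<in> Ar A \<Longrightarrow> g \<in> Ar A \<Longrightarrow> h \<in> Ar A \<Longrightarrow> Cd A f = Dm A g \<Longrightarrow> Cd A g = Dm A h \<Longrightarrow>
     (h \<cdot> g) \<cdot> f = h \<cdot> g \<cdot> f"
  using is_category unfolding is_category_def by metis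

lemma comp_assoc:
  "f \<in> hom A X Y \<Longrightarrow> g \<in> hom A Y Z \<Longrightarrow> h \<in> hom A Z W \<Longrightarrow> (h \<cdot> g) \<cdot> f = h \<cdot> g \<cdot> f"
  using comp_assoc_Ar by (simp add: hom_def)

text \<open>Rewriting with these rules brings composites into right-associated form, discharging
  the typing side conditions from the membership facts in hom-sets. Equations between
  composites are then used in the extended forms below, which still match after
  normalization.\<close>
lemmas comp_normalize = hom_def comp_assoc_Ar comp_Ar Dm_comp Cd_comp

lemma comp_id: "f \<in> hom A X Y \<Longrightarrow> f \<cdot> idm A X = f"
  and id_comp: "f \<in> hom A X Y \<Longrightarrow> idm A Y \<cdot> f = f"
  using is_category unfolding is_category_def hom_def by auto

lemma comp_eq_extend:
  assumes "x \<cdot> y = z \<cdot> w" "y \<in> hom A X Y" "x \<in> hom A Y Z" "w \<in> hom A X Y'" "z \<in> hom A Y' Z"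
    and "R \<in> Ar A" "Cd A R = X"
  shows "x \<cdot> y \<cdot> R = z \<cdot> w \<cdot> R"
proof -
  have "x \<cdot> y \<cdot> R = (x \<cdot> y) \<cdot> R" using assms(2-7) by (simp add: comp_normalize)
  also have "\<dots> = (z \<cdot> w) \<cdot> R" by (simp only: assms(1))
  also have "\<dots> = z \<cdot> w \<cdot> R" using assms(2-7) by (simp add: comp_normalize)
  finally show ?thesis .
qed

lemma comp_inverse_extend:
  assumes "x \<cdot> y = idm A X" "y \<in> hom A X Y" "x \<in> hom A Y X" and "R \<in> Ar A" "Cd A R = X"
  shows "x \<cdot> y \<cdot> R = R"
proof -
  have "x \<cdot> y \<cdot> R = (x \<cdot> y) \<cdot> R" using assms(2-5) by (simp add: comp_normalize)
  also have "\<dots> = R" using assms(1,4,5) id_comp[of R "Dm A R" X] by (simp add: hom_def)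
  finally show ?thesis .
qed

lemma hom_group_axioms:
  assumes "X \<in> Ob A" "Y \<in> Ob A"
  shows "zerom A X Y \<in> hom A X Y"
    and "\<And>f g. f \<in> hom A X Y \<Longrightarrow> g \<in> hom A X Y \<Longrightarrow> addm A f g \<in> hom A X Y"
    and "\<And>f g h. f \<in> hom A X Y \<Longrightarrow> g \<in> hom A X Y \<Longrightarrow> h \<in> hom A X Y \<Longrightarrow>
           addm A (addm A f g) h = addm A f (addm A g h)"
    and "\<And>f g. f \<in> hom A X Y \<Longrightarrow> g \<in> hom A X Y \<Longrightarrow> addm A f g = addm A g f"
    and "\<And>f. f \<in> hom A X Y \<Longrightarrow> addm A f (zerom A X Y) = f"
    and "\<And>f. f \<in> hom A X Y \<Longrightarrow> \<exists>g\<in>hom A X Y. addm A f g = zerom A X Y"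
  using conjunct1[OF is_preadditive[unfolded is_preadditive_def]] assms by blast+

lemma zero_in_hom: "X \<in> Ob A \<Longrightarrow> Y \<in> Ob A \<Longrightarrow> zerom A X Y \<in> hom A X Y"
  using hom_group_axioms(1) .

lemma add_in_hom: "f \<in> hom A X Y \<Longrightarrow> g \<in> hom A X Y \<Longrightarrow> addm A f g \<in> hom A X Y"
  and add_assoc: "f \<in> hom A X Y \<Longrightarrow> g \<in> hom A X Y \<Longrightarrow> h \<in> hom A X Y \<Longrightarrow>
     addm A (addm A f g) h = addm A f (addm A g h)"
  and add_commute: "f \<in> hom A X Y \<Longrightarrow> g \<in> hom A X Y \<Longrightarrow> addm A f g = addm A g f"
  and add_zero: "f \<in> hom A X Y \<Longrightarrow> addm A f (zerom A X Y) = f"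
  and add_inverse: "f \<in> hom A X Y \<Longrightarrow> \<exists>g\<in>hom A X Y. addm A f g = zerom A X Y"
  using hom_group_axioms hom_ObD by meson+

lemma zero_add: "f \<in> hom A X Y \<Longrightarrow> addm A (zerom A X Y) f = f"
  using add_zero add_commute zero_in_hom hom_ObD by metis

lemma comp_add_left:
  "f \<in> hom A X Y \<Longrightarrow> g \<in> hom A X Y \<Longrightarrow> h \<in> hom A Y Z \<Longrightarrow> h \<cdot> addm A f g = addm A (h \<cdot> f) (h \<cdot> g)"
  and comp_add_right:
  "f \<in> hom A Y Z \<Longrightarrow> g \<in> hom A Y Z \<Longrightarrow> h \<in> hom A X Y \<Longrightarrow> addm A f g \<cdot> h = addm A (f \<cdot> h) (g \<cdot> h)"
  using is_preadditive hom_ObD unfolding is_preadditive_def by meson+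

lemma add_self_eq_zero: assumes "x \<in> hom A X Y" "addm A x x = x" shows "x = zerom A X Y"
proof -
  obtain y where y: "y \<in> hom A X Y" "addm A x y = zerom A X Y" using add_inverse assms by blast
  have "x = addm A x (addm A x y)" using y add_zero assms by simp
  also have "\<dots> = addm A (addm A x x) y" using add_assoc assms y by metis
  also have "\<dots> = zerom A X Y" using y assms by simp
  finally show ?thesis .
qed

lemma comp_zero: assumes "f \<in> hom A Y Z" "X \<in> Ob A" shows "f \<cdot> zerom A X Y = zerom A X Z"
proof -
  have z: "zerom A X Y \<in> hom A X Y" using zero_in_hom assms hom_ObD by blast
  have "f \<cdot> zerom A X Y = addm A (f \<cdot> zerom A X Y) (f \<cdot> zerom A X Y)"
    using comp_add_left[OF z z assms(1)] add_zero[OF z] by simp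
  then show ?thesis using add_self_eq_zero comp_in_hom z assms by metis
qed

lemma zero_comp: assumes "f \<in> hom A X Y" "Z \<in> Ob A" shows "zerom A Y Z \<cdot> f = zerom A X Z"
proof -
  have z: "zerom A Y Z \<in> hom A Y Z" using zero_in_hom assms hom_ObD by blast
  have "zerom A Y Z \<cdot> f = addm A (zerom A Y Z \<cdot> f) (zerom A Y Z \<cdot> f)"
    using comp_add_right[OF z z assms(1)] add_zero[OF z] by simp
  then show ?thesis using add_self_eq_zero comp_in_hom z assms by metis
qed

lemma preadditive_category_opposite: "preadditive_category (opposite A)"
proof
  show "is_category (opposite A)" using is_category by (rule is_category_opposite)
  show "is_preadditive (opposite A)"
    unfolding is_preadditive_def hom_opposite opposite_simps
    by (intro conjI ballI)
       (simp_all add: zero_in_hom add_in_hom add_assoc add_commute add_zero add_inverse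
         comp_add_left comp_add_right)
qed

lemma kernel_in_hom: "is_kernel A f k \<Longrightarrow> k \<in> hom A (Dm A k) (Dm A f)"
  by (simp add: is_kernel_def hom_def)

lemma kernel_comp_eq_zero: "is_kernel A f k \<Longrightarrow> f \<cdot> k = zerom A (Dm A k) (Cd A f)"
  by (simp add: is_kernel_def)

lemma kernel_universal:
  assumes "is_kernel A f k" "x \<in> hom A W (Dm A f)" "f \<cdot> x = zerom A W (Cd A f)"
  shows "\<exists>!u. u \<in> hom A W (Dm A k) \<and> k \<cdot> u = x"
proof -
  have universal: "\<And>y. y \<in> Ar A \<Longrightarrow> Cd A y = Dm A f \<Longrightarrow> f \<cdot> y = zerom A (Dm A y) (Cd A f) \<Longrightarrow>
      \<exists>!u. u \<in> hom A (Dm A y) (Dm A k) \<and> k \<cdot> u = y"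
    using assms(1) unfolding is_kernel_def by blast
  have x: "x \<in> Ar A" "Cd A x = Dm A f" "Dm A x = W" using assms(2) by (auto simp: hom_def)
  then have "f \<cdot> x = zerom A (Dm A x) (Cd A f)" using assms(3) by simp
  from universal[OF x(1,2) this] show ?thesis unfolding x(3) .
qed

lemma kernel_factor:
  assumes "is_kernel A f k" "x \<in> hom A W (Dm A f)" "f \<cdot> x = zerom A W (Cd A f)"
  obtains u where "u \<in> hom A W (Dm A k)" "k \<cdot> u = x"
  using kernel_universal[OF assms] that by blast

lemma kernel_mono: assumes k: "is_kernel A f k" shows "mono A k"
  unfolding mono_def
proof (intro conjI ballI impI)
  show "k \<in> Ar A" using k by (simp add: is_kernel_def)
  fix g h assume "g \<in> Ar A" "h \<in> Ar A"
    and gh: "Cd A g = Dm A k \<and> Cd A h = Dm A k \<and> Dm A g = Dm A h \<and> k \<cdot> g = k \<cdot> h"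
  then have g: "g \<in> hom A (Dm A g) (Dm A k)" and h: "h \<in> hom A (Dm A g) (Dm A k)"
    by (auto simp: hom_def)
  have kh: "k \<in> hom A (Dm A k) (Dm A f)" using kernel_in_hom[OF k] .
  have f: "f \<in> hom A (Dm A f) (Cd A f)" using k by (simp add: is_kernel_def hom_def)
  have "f \<cdot> k \<cdot> g = (f \<cdot> k) \<cdot> g" using comp_assoc[OF g kh f] by simp
  also have "\<dots> = zerom A (Dm A g) (Cd A f)"
    using kernel_comp_eq_zero[OF k] zero_comp[OF g] hom_ObD[OF f] by simp
  finally have "\<exists>!u. u \<in> hom A (Dm A g) (Dm A k) \<and> k \<cdot> u = k \<cdot> g"
    by (rule kernel_universal[OF k comp_in_hom[OF g kh]])
  then show "g = h" using g h gh by auto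
qed

lemma mono_cancel:
  "mono A m \<Longrightarrow> g \<in> hom A W (Dm A m) \<Longrightarrow> h \<in> hom A W (Dm A m) \<Longrightarrow> m \<cdot> g = m \<cdot> h \<Longrightarrow> g = h"
  unfolding mono_def hom_def by auto

lemma cokernel_in_hom: "is_cokernel A f c \<Longrightarrow> c \<in> hom A (Cd A f) (Cd A c)"
  using preadditive_category.kernel_in_hom[OF preadditive_category_opposite] by simp

lemma cokernel_comp_eq_zero: "is_cokernel A f c \<Longrightarrow> c \<cdot> f = zerom A (Dm A f) (Cd A c)"
  using preadditive_category.kernel_comp_eq_zero[OF preadditive_category_opposite] by simp

lemma cokernel_factor:
  assumes "is_cokernel A f c" "x \<in> hom A (Cd A f) W" "x \<cdot> f = zerom A (Dm A f) W"
  obtains u where "u \<in> hom A (Cd A c) W" "u \<cdot> c = x"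
  using preadditive_category.kernel_factor[OF preadditive_category_opposite, of f c x W] assms that
  by simp blast

lemma epi_cancel:
  "epi A e \<Longrightarrow> g \<in> hom A (Cd A e) Z \<Longrightarrow> h \<in> hom A (Cd A e) Z \<Longrightarrow> g \<cdot> e = h \<cdot> e \<Longrightarrow> g = h"
  using preadditive_category.mono_cancel[OF preadditive_category_opposite] by simp

lemma idempotent_complement:
  assumes e: "e \<in> hom A X X" and idem: "e \<cdot> e = e"
  obtains e' where "e' \<in> hom A X X" "addm A e e' = idm A X"
    "e \<cdot> e' = zerom A X X" "e' \<cdot> e = zerom A X X"
proof -
  have X: "X \<in> Ob A" using e hom_ObD by blast
  have one: "idm A X \<in> hom A X X" using id_in_hom X by blast
  obtain n where n: "n \<in> hom A X X" "addm A e n = zerom A X X" using add_inverse e by blast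
  define e' where "e' = addm A (idm A X) n"
  have e': "e' \<in> hom A X X" unfolding e'_def using add_in_hom one n by blast
  have "addm A e e' = addm A (addm A (idm A X) e) n"
    unfolding e'_def using add_assoc add_commute e one n by metis
  also have "\<dots> = idm A X" using add_assoc add_zero e one n by metis
  finally have sum: "addm A e e' = idm A X" .
  have "addm A e (e \<cdot> n) = e \<cdot> addm A e n" using comp_add_left[OF e n(1) e] idem by simp
  then have "e \<cdot> e' = e \<cdot> addm A e n"
    unfolding e'_def using comp_add_left[OF one n(1) e] comp_id[OF e] by simp
  then have left: "e \<cdot> e' = zerom A X X" using n(2) comp_zero[OF e X] by simp
  have "addm A e (n \<cdot> e) = addm A e n \<cdot> e" using comp_add_right[OF e n(1) e] idem by simp
  then have "e' \<cdot> e = addm A e n \<cdot> e"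
    unfolding e'_def using comp_add_right[OF one n(1) e] id_comp[OF e] by simp
  then have right: "e' \<cdot> e = zerom A X X" using n(2) zero_comp[OF e X] by simp
  show ?thesis using that e' sum left right .
qed

lemma abelian_End_if_semicommutative:
  assumes "semicommutative_End A X" shows "abelian_End A X"
  unfolding abelian_End_def
proof (intro ballI impI)
  fix e f assume e: "e \<in> hom A X X" and idem: "e \<cdot> e = e" and f: "f \<in> hom A X X"
  obtain e' where e': "e' \<in> hom A X X" and sum: "addm A e e' = idm A X"
    and "e \<cdot> e' = zerom A X X" "e' \<cdot> e = zerom A X X"
    using idempotent_complement[OF e idem] by blast
  then have efe': "e \<cdot> f \<cdot> e' = zerom A X X" and e'fe: "e' \<cdot> f \<cdot> e = zerom A X X"
    using assms e f unfolding semicommutative_End_def by blast+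
  have ef: "e \<cdot> f \<in> hom A X X" and fe: "f \<cdot> e \<in> hom A X X" using comp_in_hom e f by blast+
  have "e \<cdot> f = (e \<cdot> f) \<cdot> addm A e e'" using sum comp_id[OF ef] by simp
  also have "\<dots> = (e \<cdot> f) \<cdot> e" using comp_add_left[OF e e' ef] efe' comp_assoc[OF e' f e] add_zero
      comp_in_hom[OF e ef] by simp
  also have "\<dots> = e \<cdot> f \<cdot> e" using comp_assoc[OF e f e] .
  also have "\<dots> = addm A e e' \<cdot> f \<cdot> e" using comp_add_right[OF e e' fe] e'fe add_zero
      comp_in_hom[OF fe e] by simp
  also have "\<dots> = f \<cdot> e" using sum id_comp[OF fe] by simp
  finally show "e \<cdot> f = f \<cdot> e" .
qed

lemma fully_invariant_kernelI:
  assumes k: "is_kernel A f k"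
    and annihilated: "\<And>h. h \<in> hom A (Dm A f) (Dm A f) \<Longrightarrow> f \<cdot> h \<cdot> k = zerom A (Dm A k) (Cd A f)"
  shows "fully_invariant A k"
  unfolding fully_invariant_def
proof (intro conjI ballI)
  show "mono A k" using kernel_mono[OF k] .
  fix h assume "h \<in> hom A (Cd A k) (Cd A k)"
  then have h: "h \<in> hom A (Dm A f) (Dm A f)" using k by (simp add: is_kernel_def)
  obtain \<alpha> where "\<alpha> \<in> hom A (Dm A k) (Dm A k)" "k \<cdot> \<alpha> = h \<cdot> k"
    using kernel_factor[OF k comp_in_hom[OF kernel_in_hom[OF k] h] annihilated[OF h]] .
  then show "\<exists>\<alpha>\<in>hom A (Dm A k) (Dm A k). h \<cdot> k = k \<cdot> \<alpha>" by metis
qed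

lemma fully_coinvariant_cokernelI:
  assumes "is_cokernel A f c"
    and "\<And>h. h \<in> hom A (Cd A f) (Cd A f) \<Longrightarrow> (c \<cdot> h) \<cdot> f = zerom A (Dm A f) (Cd A c)"
  shows "fully_coinvariant A c"
  using preadditive_category.fully_invariant_kernelI[OF preadditive_category_opposite, of f c]
    assms by simp

lemma fully_coinvariant_cokernel_of_fully_invariant:
  assumes d: "is_cokernel A i d" and fi: "fully_invariant A i"
  shows "fully_coinvariant A d"
proof (rule fully_coinvariant_cokernelI[OF d])
  fix h assume h: "h \<in> hom A (Cd A i) (Cd A i)"
  obtain \<alpha> where \<alpha>: "\<alpha> \<in> hom A (Dm A i) (Dm A i)" "h \<cdot> i = i \<cdot> \<alpha>"
    using fi h unfolding fully_invariant_def by blast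
  have i: "i \<in> hom A (Dm A i) (Cd A i)" using fi by (simp add: fully_invariant_def mono_def hom_def)
  have "(d \<cdot> h) \<cdot> i = (d \<cdot> i) \<cdot> \<alpha>"
    using \<alpha> i h cokernel_in_hom[OF d] by (simp add: comp_normalize)
  also have "\<dots> = zerom A (Dm A i) (Cd A d)"
    using cokernel_comp_eq_zero[OF d] zero_comp[OF \<alpha>(1)] hom_ObD[OF cokernel_in_hom[OF d]] by simp
  finally show "(d \<cdot> h) \<cdot> i = zerom A (Dm A i) (Cd A d)" .
qed

lemma short_exact_section_retraction:
  assumes ses: "short_exact A i d" and "is_section A i"
  shows "is_retraction A d"
proof -
  have ker: "is_kernel A d i" and cok: "is_cokernel A i d" and "epi A d" and "Cd A i = Dm A d"
    using ses by (simp_all add: short_exact_def)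
  define F M C where "F = Dm A i" and "M = Cd A i" and "C = Cd A d"
  have i: "i \<in> hom A F M" and d: "d \<in> hom A M C"
    using kernel_in_hom[OF ker] cokernel_in_hom[OF cok] \<open>Cd A i = Dm A d\<close>
    by (simp_all add: F_def M_def C_def)
  obtain r where r: "r \<in> hom A M F" "r \<cdot> i = idm A F"
    using assms(2) unfolding is_section_def F_def M_def by blast
  define p where "p = i \<cdot> r"
  have p: "p \<in> hom A M M" unfolding p_def using comp_in_hom r(1) i by blast
  have "p \<cdot> p = p" unfolding p_def using comp_inverse_extend[OF r(2) i r(1)] i r(1)
    by (simp add: comp_normalize)
  then obtain p' where p': "p' \<in> hom A M M" "addm A p p' = idm A M" "p' \<cdot> p = zerom A M M"
    using idempotent_complement[OF p] by blast
  have "p' \<cdot> i = (p' \<cdot> p) \<cdot> i" unfolding p_def using r i p'(1)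
    by (simp add: comp_normalize comp_id[OF i])
  also have "\<dots> = zerom A F M" using p'(3) zero_comp[OF i] hom_ObD[OF i] by simp
  finally obtain s where s: "s \<in> hom A C M" "s \<cdot> d = p'"
    using cokernel_factor[OF cok] p'(1) by (metis C_def F_def M_def)
  have dp: "d \<cdot> p = zerom A M C" unfolding p_def
    using comp_assoc[OF r(1) i d] kernel_comp_eq_zero[OF ker] zero_comp[OF r(1)] hom_ObD[OF d]
    by (simp add: F_def C_def)
  have "(d \<cdot> s) \<cdot> d = d \<cdot> addm A p p'"
    using comp_assoc[OF d s(1) d] s(2) comp_add_left[OF p p'(1) d] dp zero_add comp_in_hom[OF p'(1) d]
    by simp
  also have "\<dots> = idm A C \<cdot> d" using p'(2) comp_id[OF d] id_comp[OF d] by simp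
  finally have "d \<cdot> s = idm A C"
    using epi_cancel[OF \<open>epi A d\<close>] comp_in_hom[OF s(1) d] id_in_hom hom_ObD[OF d]
    by (metis C_def)
  then show ?thesis using s(1) d unfolding is_retraction_def by (auto simp: hom_def C_def M_def)
qed

lemma semicommutative_End_of_fully_invariant_kernels:
  assumes kernels: "\<And>f. f \<in> Ar A \<Longrightarrow> \<exists>k. is_kernel A f k"
    and d: "d \<in> hom A M C" and s: "s \<in> hom A C M" and ds: "d \<cdot> s = idm A C"
    and invariant: "\<And>g k. g \<in> hom A M M \<Longrightarrow> is_kernel A (d \<cdot> g) k \<Longrightarrow> fully_invariant A k"
  shows "semicommutative_End A C"
  unfolding semicommutative_End_def
proof (intro ballI impI)
  fix a b f assume a: "a \<in> hom A C C" and b: "b \<in> hom A C C" and ab: "a \<cdot> b = zerom A C C"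
    and f: "f \<in> hom A C C"
  note cancel = comp_inverse_extend[OF ds s d]
  have C: "C \<in> Ob A" using hom_ObD[OF d] by blast
  have ad: "a \<cdot> d \<in> hom A M C" using comp_in_hom d a by blast
  obtain k where k: "is_kernel A (a \<cdot> d) k" using kernels ad by (auto simp: hom_def)
  define K where "K = Dm A k"
  have kh: "k \<in> hom A K M" using kernel_in_hom[OF k] ad by (simp add: K_def hom_def)
  have adk: "a \<cdot> d \<cdot> k = zerom A K C"
    using kernel_comp_eq_zero[OF k] kh d a by (simp add: comp_normalize K_def)
  have "d \<cdot> s \<cdot> a \<cdot> d = a \<cdot> d" using cancel ad by (simp add: hom_def)
  then have "fully_invariant A k"
    using invariant[of "s \<cdot> a \<cdot> d" k] k comp_in_hom[OF ad s] by simp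
  then obtain \<alpha> where \<alpha>: "\<alpha> \<in> hom A K K" "(s \<cdot> f \<cdot> d) \<cdot> k = k \<cdot> \<alpha>"
    using comp_in_hom[OF comp_in_hom[OF d f] s] kh unfolding fully_invariant_def K_def
    by (auto simp: hom_def)
  have "(a \<cdot> d) \<cdot> s \<cdot> b = zerom A C C" using ab cancel b s d a by (simp add: comp_normalize)
  then obtain u where u: "u \<in> hom A C K" "k \<cdot> u = s \<cdot> b"
    using kernel_factor[OF k] comp_in_hom[OF b s] ad by (auto simp: hom_def K_def)
  have "a \<cdot> f \<cdot> b = a \<cdot> d \<cdot> s \<cdot> f \<cdot> d \<cdot> s \<cdot> b" using cancel a f b s d by (simp add: comp_normalize)
  also have "\<dots> = a \<cdot> d \<cdot> ((s \<cdot> f \<cdot> d) \<cdot> k) \<cdot> u" using u a f d s kh by (simp add: comp_normalize)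
  also have "\<dots> = a \<cdot> d \<cdot> (k \<cdot> \<alpha>) \<cdot> u" by (simp only: \<alpha>(2))
  also have "\<dots> = (a \<cdot> d \<cdot> k) \<cdot> \<alpha> \<cdot> u" using \<alpha>(1) u(1) a d kh by (simp add: comp_normalize)
  also have "\<dots> = zerom A C C" using adk zero_comp[OF comp_in_hom[OF u(1) \<alpha>(1)] C] by simp
  finally show "a \<cdot> f \<cdot> b = zerom A C C" .
qed

lemma induced_comp:
  assumes d: "d \<in> hom A M C" and x: "x \<in> hom A M M" "x' \<in> hom A C C" "d \<cdot> x = x' \<cdot> d"
    and y: "y \<in> hom A M M" "y' \<in> hom A C C" "d \<cdot> y = y' \<cdot> d"
  shows "x' \<cdot> y' \<cdot> d = d \<cdot> x \<cdot> y"
proof -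
  have "x' \<cdot> y' \<cdot> d = x' \<cdot> d \<cdot> y" using y(3) by simp
  also have "\<dots> = d \<cdot> x \<cdot> y" using comp_eq_extend[OF x(3)[symmetric] d x(2) x(1) d] y(1)
    by (simp add: hom_def)
  finally show ?thesis .
qed

lemma induced_idempotent:
  assumes "epi A d" "d \<in> hom A M C" "p \<in> hom A M M" "p \<cdot> p = p" "p' \<in> hom A C C" "d \<cdot> p = p' \<cdot> d"
  shows "p' \<cdot> p' = p'"
proof -
  have "(p' \<cdot> p') \<cdot> d = p' \<cdot> d"
    using induced_comp[OF assms(2-3,5-6,3,5-6)] assms(2-6) by (simp add: comp_normalize)
  then show ?thesis
    using epi_cancel[OF assms(1)] comp_in_hom[OF assms(5) assms(5)] assms(2,5) by (simp add: hom_def)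
qed

lemma comp_eq_zero_through_idempotent:
  assumes x: "x \<in> hom A K C" and "g \<in> hom A C C" "h \<in> hom A C C" "p \<in> hom A C C"
    and "p \<cdot> h = h \<cdot> p" "g \<cdot> p = zerom A C C" "p \<cdot> x = x"
  shows "g \<cdot> h \<cdot> x = zerom A K C"
proof -
  have "g \<cdot> h \<cdot> x = g \<cdot> h \<cdot> p \<cdot> x" using assms(7) by simp
  also have "\<dots> = (g \<cdot> p) \<cdot> h \<cdot> x"
    using comp_eq_extend[OF assms(5)[symmetric] assms(4,3,3,4)] assms(2-4) x
    by (simp add: comp_normalize)
  also have "\<dots> = zerom A K C"
    using assms(6) zero_comp[OF comp_in_hom[OF x assms(3)]] hom_ObD[OF x] by simp
  finally show ?thesis .
qed

text \<open>For a retraction t of k = ker(dg), the idempotent k t induces an idempotent p' of End(C)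
  with g' p' = 0 and p' d k = d k; centrality of p' then kills d g h k for every h.\<close>
lemma fully_invariant_split_kernel:
  assumes fc: "fully_coinvariant A d" and ab: "abelian_End A (Cd A d)"
    and "g \<in> hom A (Dm A d) (Dm A d)" and k: "is_kernel A (d \<cdot> g) k" and "is_section A k"
  shows "fully_invariant A k"
proof -
  define M C K where "M = Dm A d" and "C = Cd A d" and "K = Dm A k"
  have g: "g \<in> hom A M M" using assms(3) unfolding M_def .
  have ep: "epi A d" using fc by (simp add: fully_coinvariant_def)
  have d: "d \<in> hom A M C" using ep by (simp add: epi_def hom_def M_def C_def)
  have C: "C \<in> Ob A" using hom_ObD[OF d] by blast
  have induced: "\<And>h. h \<in> hom A M M \<Longrightarrow> \<exists>h'\<in>hom A C C. d \<cdot> h = h' \<cdot> d"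
    using fc unfolding fully_coinvariant_def M_def C_def by blast
  have kh: "k \<in> hom A K M" using kernel_in_hom[OF k] comp_in_hom[OF g d]
    by (simp add: K_def M_def hom_def)
  have dgk: "d \<cdot> g \<cdot> k = zerom A K C"
    using kernel_comp_eq_zero[OF k] kh g d by (simp add: comp_normalize K_def M_def C_def)
  obtain t where t: "t \<in> hom A M K" "t \<cdot> k = idm A K"
    using \<open>is_section A k\<close> kh unfolding is_section_def by (auto simp: hom_def K_def)
  define p where "p = k \<cdot> t"
  have p: "p \<in> hom A M M" unfolding p_def using comp_in_hom t(1) kh by blast
  obtain p' where p': "p' \<in> hom A C C" "d \<cdot> p = p' \<cdot> d" using induced[OF p] by blast
  obtain g' where g': "g' \<in> hom A C C" "d \<cdot> g = g' \<cdot> d" using induced g by blast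
  have "p \<cdot> p = p" using comp_inverse_extend[OF t(2) kh t(1)] t(1) kh
    by (simp add: p_def comp_normalize)
  then have p'_idem: "p' \<cdot> p' = p'" using induced_idempotent[OF ep d p] p' by blast
  have "(g' \<cdot> p') \<cdot> d = (d \<cdot> g \<cdot> k) \<cdot> t"
    using induced_comp[OF d g g' p p'] t(1) kh g d g'(1) p'(1) by (simp add: comp_normalize p_def)
  also have "\<dots> = zerom A C C \<cdot> d" using dgk zero_comp[OF t(1) C] zero_comp[OF d C] by simp
  finally have g'p': "g' \<cdot> p' = zerom A C C"
    using epi_cancel[OF ep] comp_in_hom[OF p'(1) g'(1)] zero_in_hom[OF C C] by (simp add: C_def)
  have p'dk: "p' \<cdot> d \<cdot> k = d \<cdot> k"
    using comp_eq_extend[OF p'(2)[symmetric] d p'(1) p d] kh t d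
    by (simp add: p_def comp_normalize comp_id[OF kh])
  show ?thesis
  proof (rule fully_invariant_kernelI[OF k])
    fix h assume "h \<in> hom A (Dm A (d \<cdot> g)) (Dm A (d \<cdot> g))"
    then have h: "h \<in> hom A M M" using comp_in_hom[OF g d] by (simp add: hom_def M_def)
    obtain h' where h': "h' \<in> hom A C C" "d \<cdot> h = h' \<cdot> d" using induced[OF h] by blast
    have commute: "p' \<cdot> h' = h' \<cdot> p'" using ab p' h' p'_idem unfolding abelian_End_def C_def by blast
    have "(d \<cdot> g) \<cdot> h \<cdot> k = (d \<cdot> g \<cdot> h) \<cdot> k" using kh h g d by (simp add: comp_normalize)
    also have "\<dots> = (g' \<cdot> h' \<cdot> d) \<cdot> k" using induced_comp[OF d g g' h h'] by simp
    also have "\<dots> = g' \<cdot> h' \<cdot> d \<cdot> k" using kh d g'(1) h'(1) by (simp add: comp_normalize)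
    also have "\<dots> = zerom A K C"
      using comp_eq_zero_through_idempotent[OF comp_in_hom[OF kh d] g'(1) h'(1) p'(1)] commute g'p' p'dk
      by simp
    finally show "(d \<cdot> g) \<cdot> h \<cdot> k = zerom A (Dm A k) (Cd A (d \<cdot> g))"
      using comp_in_hom[OF g d] by (simp add: K_def C_def hom_def)
  qed
qed

theorem strongly_self_F_split_iff:
  assumes kernels: "\<And>f. f \<in> Ar A \<Longrightarrow> \<exists>k. is_kernel A f k"
    and ses: "short_exact A i d" and fc: "fully_coinvariant A d"
  shows "strongly_self_F_split A i d \<longleftrightarrow> self_F_split A i d \<and> abelian_End A (Cd A d)"
proof
  assume strong: "strongly_self_F_split A i d"
  then have "self_F_split A i d"
    unfolding strongly_self_F_split_def self_F_split_def by blast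
  moreover have "abelian_End A (Cd A d)"
  proof -
    have mid: "Cd A i = Dm A d" and ker: "is_kernel A d i" and "epi A d"
      using ses by (simp_all add: short_exact_def)
    have d: "d \<in> hom A (Dm A d) (Cd A d)" using \<open>epi A d\<close> by (simp add: epi_def hom_def)
    have "is_kernel A (d \<cdot> idm A (Dm A d)) i" using ker comp_id[OF d] by simp
    then have "is_section A i"
      using strong id_in_hom hom_ObD[OF d] mid unfolding strongly_self_F_split_def by metis
    then obtain s where "s \<in> hom A (Cd A d) (Dm A d)" "d \<cdot> s = idm A (Cd A d)"
      using short_exact_section_retraction[OF ses] d by (auto simp: is_retraction_def hom_def)
    moreover have "\<And>g k. g \<in> hom A (Dm A d) (Dm A d) \<Longrightarrow> is_kernel A (d \<cdot> g) k \<Longrightarrow>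
        fully_invariant A k"
      using strong mid unfolding strongly_self_F_split_def by metis
    ultimately have "semicommutative_End A (Cd A d)"
      using semicommutative_End_of_fully_invariant_kernels[OF kernels d] by blast
    then show ?thesis by (rule abelian_End_if_semicommutative)
  qed
  ultimately show "self_F_split A i d \<and> abelian_End A (Cd A d)" ..
next
  assume "self_F_split A i d \<and> abelian_End A (Cd A d)"
  moreover have "Cd A i = Dm A d" using ses by (simp add: short_exact_def)
  ultimately show "strongly_self_F_split A i d"
    using fully_invariant_split_kernel[OF fc]
    unfolding strongly_self_F_split_def self_F_split_def by metis
qed

theorem dual_strongly_self_F_split_iff:
  assumes cokernels: "\<And>f. f \<in> Ar A \<Longrightarrow> \<exists>c. is_cokernel A f c"
    and ses: "short_exact A i d" and fi: "fully_invariant A i"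
  shows "dual_strongly_self_F_split A i d \<longleftrightarrow> dual_self_F_split A i d \<and> abelian_End A (Dm A i)"
proof -
  have "Cd A i = Dm A d" using ses by (simp add: short_exact_def)
  then show ?thesis
    using preadditive_category.strongly_self_F_split_iff[OF preadditive_category_opposite, of d i]
      cokernels ses fi
    by (simp add: strongly_self_F_split_opposite self_F_split_opposite)
qed

end

theorem theorem4p10:
  fixes A :: "('o, 'm) precat" and i d :: 'm
  assumes "abelian_category A"
    and "fully_invariant_ses A i d"
  shows "(strongly_self_F_split A i d \<longleftrightarrow>
            self_F_split A i d \<and> abelian_End A (Cd A d)) \<and>
         (dual_strongly_self_F_split A i d \<longleftrightarrow>
            dual_self_F_split A i d \<and> abelian_End A (Dm A i))"
proof -
  interpret preadditive_category A
    using assms(1) by unfold_locales (simp_all add: abelian_category_def)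
  have kernels: "\<And>f. f \<in> Ar A \<Longrightarrow> \<exists>k. is_kernel A f k"
    and cokernels: "\<And>f. f \<in> Ar A \<Longrightarrow> \<exists>c. is_cokernel A f c"
    using assms(1) by (simp_all add: abelian_category_def)
  have ses: "short_exact A i d" and fi: "fully_invariant A i"
    using assms(2) by (simp_all add: fully_invariant_ses_def)
  have "is_cokernel A i d" using ses by (simp add: short_exact_def)
  then have "fully_coinvariant A d" using fi by (rule fully_coinvariant_cokernel_of_fully_invariant)
  then show ?thesis
    using strongly_self_F_split_iff[OF kernels ses] dual_strongly_self_F_split_iff[OF cokernels ses fi]
    by blast
qed

end
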